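(* For every BIMS channel with capacity $C$ and every rate $R\ge0$, the random coding exponent satisfies $$E_{\rm r}^{\rm bsc}(R;C)\le E_{\rm r}(R)\le E_{\rm r}^{\rm bec}(R;C).$$
   Context: A BIMS (binary-input memoryless symmetric) channel is a memoryless channel with input alphabet $\{x_0,x_1\}$, finite output alphabet $\mathcal Y$ and transition probabilities $P_{Y|X}(y|x)$. It is symmetric in Gallager's sense: the columns of the $2\times|\mathcal Y|$ transition matrix (rows indexed by inputs) can be partitioned into submatrices such that, in each submatrix, every row is a permutation of every other row and every column is a permutation of every other column. Inputs are equiprobable and logarithms are base 2. The capacity $C$ is $I(X;Y)$ under equiprobable inputs. For $\rho>-1$, $$F(\rho)=\sum_{x}\tfrac12\sum_{y:\,P_{Y|X}(y|x)>0}P_{Y|X}(y|x)\left(\frac{\tfrac12\sum_{x'}P_{Y|X}(y|x')^{1/(1+\rho)}}{P_{Y|X}(y|x)^{1/(1+\rho)}}\right)^{\rho},$$ and $E_0(\rho)=-\log F(\rho)$. The random coding exponent is $E_{\rm r}(R)=\max_{0\le\rho\le1}\bigl(E_0(\rho)-\rho R\bigr)$. $h$ is the binary entropy function and $h^{-1}$ its inverse on $[0,\tfrac12]$. Define $$F^{\rm bec}(\rho;C)=1+(2^{-\rho}-1)C,$$ $$F^{\rm bsc}(\rho;C)=2^{-\rho}\bigl(\varepsilon^{1/(1+\rho)}+(1-\varepsilon)^{1/(1+\rho)}\bigr)^{1+\rho},\qquad \varepsilon=h^{-1}(1-C).$$ Then $$E_{\rm r}^{\rm bec}(R;C)=\max_{0\le\rho\le1}\bigl(-\log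 F^{\rm bec}(\rho;C)-\rho R\bigr),\qquad E_{\rm r}^{\rm bsc}(R;C)=\max_{0\le\rho\le1}\bigl(-\log F^{\rm bsc}(\rho;C)-\rho R\bigr)$$ are the random coding exponents of the BEC and of the BSC of capacity $C$. *)

theory Defs
  imports Complex_Main
begin

text \<open>A binary-input channel with finite output alphabet 'y.  The input alphabet
  {x0, x1} is represented by bool (x0 = False, x1 = True); W x y = P(y|x).\<close>

definition stochastic_channel :: "(bool \<Rightarrow> 'y::finite \<Rightarrow> real) \<Rightarrow> bool" where
  "stochastic_channel W \<longleftrightarrow> (\<forall>x y. W x y \<ge> 0) \<and> (\<forall>x. (\<Sum>y\<in>UNIV. W x y) = 1)"

definition gallager_symmetric :: "(bool \<Rightarrow> 'y::finite \<Rightarrow> real) \<Rightarrow> bool" where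
  "gallager_symmetric W \<longleftrightarrow>
     (\<exists>P :: 'y set set.
        \<Union>P = UNIV \<and> (\<forall>B\<in>P. B \<noteq> {}) \<and>
        (\<forall>B\<in>P. \<forall>B'\<in>P. B \<noteq> B' \<longrightarrow> B \<inter> B' = {}) \<and>
        (\<forall>B\<in>P.
           (\<forall>x x'. \<exists>\<sigma>. bij_betw \<sigma> B B \<and> (\<forall>y\<in>B. W x' (\<sigma> y) = W x y)) \<and>
           (\<forall>y\<in>B. \<forall>y'\<in>B. \<exists>\<pi>. bij \<pi> \<and> (\<forall>x. W x y' = W (\<pi> x) y))))"

definition bims :: "(bool \<Rightarrow> 'y::finite \<Rightarrow> real) \<Rightarrow> bool" where
  "bims W \<longleftrightarrow> stochastic_channel W \<and> gallager_symmetric W"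

text \<open>Capacity = I(X;Y) under equiprobable inputs (base-2 logarithms).\<close>
definition capacity :: "(bool \<Rightarrow> 'y::finite \<Rightarrow> real) \<Rightarrow> real" where
  "capacity W = (\<Sum>x\<in>UNIV. 1/2 * (\<Sum>y\<in>{y. W x y > 0}.
       W x y * log 2 (W x y / ((1/2) * (\<Sum>x'\<in>UNIV. W x' y)))))"

definition gallager_F :: "(bool \<Rightarrow> 'y::finite \<Rightarrow> real) \<Rightarrow> real \<Rightarrow> real" where
  "gallager_F W \<rho> = (\<Sum>x\<in>UNIV. 1/2 * (\<Sum>y\<in>{y. W x y > 0}.
       W x y * (((1/2) * (\<Sum>x'\<in>UNIV. W x' y powr (1/(1+\<rho>)))) / (W x y powr (1/(1+\<rho>)))) powr \<rho>))"

definition E0 :: "(bool \<Rightarrow> 'y::finite \<Rightarrow> real) \<Rightarrow> real \<Rightarrow> real" where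
  "E0 W \<rho> = - log 2 (gallager_F W \<rho>)"

definition Er :: "(bool \<Rightarrow> 'y::finite \<Rightarrow> real) \<Rightarrow> real \<Rightarrow> real" where
  "Er W R = (SUP \<rho>\<in>{0..1}. E0 W \<rho> - \<rho> * R)"

definition bin_entropy :: "real \<Rightarrow> real" where
  "bin_entropy p = - p * log 2 p - (1 - p) * log 2 (1 - p)"

definition bin_entropy_inv :: "real \<Rightarrow> real" where
  "bin_entropy_inv z = (THE p. p \<in> {0..1/2} \<and> bin_entropy p = z)"

definition F_bec :: "real \<Rightarrow> real \<Rightarrow> real" where
  "F_bec \<rho> C = 1 + (2 powr (-\<rho>) - 1) * C"

definition F_bsc :: "real \<Rightarrow> real \<Rightarrow> real" where
  "F_bsc \<rho> C = (let \<epsilon> = bin_entropy_inv (1 - C) in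
     2 powr (-\<rho>) * (\<epsilon> powr (1/(1+\<rho>)) + (1 - \<epsilon>) powr (1/(1+\<rho>))) powr (1+\<rho>))"

definition Er_bec :: "real \<Rightarrow> real \<Rightarrow> real" where
  "Er_bec R C = (SUP \<rho>\<in>{0..1}. - log 2 (F_bec \<rho> C) - \<rho> * R)"

definition Er_bsc :: "real \<Rightarrow> real \<Rightarrow> real" where
  "Er_bsc R C = (SUP \<rho>\<in>{0..1}. - log 2 (F_bsc \<rho> C) - \<rho> * R)"

end

theory Submission
  imports Defs
begin

text \<open>
  With equiprobable inputs, both the Gallager function F(\<rho>) and the capacity C
  are sums over output symbols y of a term depending only on the pair a = P(y|x0), b = P(y|x1).
  Writing w = (a+b)/2 and x = |ln a - ln b| (the log-likelihood ratio of y), the capacity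
  term is w (1 - h) and the F-term is w 2^-\<rho> G(x), where h = H(x)/ln 2 is the binary entropy
  attached to x and G(x) = (1 + e^(x/(1+\<rho>)))^(1+\<rho>) / (1 + e^x).  The key analytic fact is
  that G, viewed as a function of the entropy H(x), is concave: the slope dG/dH is increasing
  in x, i.e. decreasing in H.  Concavity gives, per output symbol, a chord lower bound (its
  ends are the noiseless and the completely noisy symbol: the BEC) and a tangent upper bound
  at any point x0.
  Summing over y, the lower bound becomes F \<ge> F_bec(\<rho>;C), and choosing x0 with
  H(x0) = ln 2 (1 - C) the upper bound becomes F \<le> F_bsc(\<rho>;C).  Taking -log and the
  supremum over \<rho> \<in> [0,1] yields the theorem.
\<close>

lemma one_plus_exp_pos [simp]: "0 < 1 + exp (x::real)"
  by (simp add: add_pos_pos)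

lemma one_plus_exp_neq_0 [simp]: "1 + exp (x::real) \<noteq> 0"
  using one_plus_exp_pos[of x] by linarith

section \<open>Functions of the log-likelihood ratio\<close>

text \<open>Natural-log entropy of the binary distribution (1/(1+e^x), e^x/(1+e^x)),
  i.e. of the posterior of an output symbol with log-likelihood ratio x.\<close>
definition llr_entropy :: "real \<Rightarrow> real" where
  "llr_entropy x = ln (1 + exp x) - x * exp x / (1 + exp x)"

text \<open>The factor (1 + e^(x/(1+r)))^r, written with exp/ln to avoid side conditions.\<close>
definition tilt :: "real \<Rightarrow> real \<Rightarrow> real" where
  "tilt r x = exp (r * ln (1 + exp (x/(1+r))))"

text \<open>Normalised Gallager term (1 + e^(x/(1+r)))^(1+r) / (1 + e^x) of a symbol with
  log-likelihood ratio x.\<close>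
definition gal :: "real \<Rightarrow> real \<Rightarrow> real" where
  "gal r x = exp ((1+r) * ln (1 + exp (x/(1+r)))) / (1 + exp x)"

text \<open>The slope of gal as a function of the entropy: gal' = gal_slope * llr_entropy'.\<close>
definition gal_slope :: "real \<Rightarrow> real \<Rightarrow> real" where
  "gal_slope r x = tilt r x * (1 - exp (- (r/(1+r)) * x)) / x"

lemma tilt_pos: "tilt r x > 0"
  unfolding tilt_def by simp

lemma llr_entropy_alt: "llr_entropy x = ln (1 + exp (-x)) + x / (1 + exp x)"
proof -
  have "1 + exp x = exp x * (1 + exp (-x))" by (simp add: algebra_simps exp_minus)
  then have "ln (1 + exp x) = x + ln (1 + exp (-x))" by (simp add: ln_mult add_pos_pos)
  moreover have "x - x * exp x / (1 + exp x) = x / (1 + exp x)" by (simp add: field_simps)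
  ultimately show ?thesis unfolding llr_entropy_def by simp
qed

lemma llr_entropy_0: "llr_entropy 0 = ln 2"
  unfolding llr_entropy_def by simp

lemma llr_entropy_pos: "x \<ge> 0 \<Longrightarrow> llr_entropy x > 0"
  unfolding llr_entropy_alt by (intro add_pos_nonneg) auto

lemma deriv_llr_entropy:
  "(llr_entropy has_real_derivative (- x * exp x / (1 + exp x)^2)) (at x)"
proof -
  have "(llr_entropy has_real_derivative
      (exp x/(1+exp x) - ((exp x + x*exp x)*(1+exp x) - x*exp x*exp x)/(1+exp x)^2)) (at x)"
    unfolding llr_entropy_def[abs_def] by (auto intro!: derivative_eq_intros simp: power2_eq_square)
  moreover have "e/(1+e) - ((e + x*e)*(1+e) - x*e*e)/(1+e)^2 = - x * e / (1 + e)^2"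
    if "1 + e \<noteq> 0" for e :: real
  proof -
    have "a/d - c/d^2 = (a*d - c)/d^2" if "d \<noteq> 0" for a c d :: real
      using that by (simp add: power2_eq_square diff_divide_distrib)
    then show ?thesis using that by simp (simp add: algebra_simps)
  qed
  ultimately show ?thesis by simp
qed

lemma llr_entropy_strict_decreasing:
  assumes "0 \<le> u" "u < v" shows "llr_entropy v < llr_entropy u"
proof -
  obtain z where z: "u < z" "z < v"
    "llr_entropy v - llr_entropy u = (v - u) * (- z * exp z / (1 + exp z)^2)"
    using MVT2[OF assms(2), of llr_entropy "\<lambda>t. - t * exp t / (1 + exp t)^2"]
      deriv_llr_entropy by blast
  have "(v - u) * (- z * exp z / (1 + exp z)^2) < 0"
    using z assms by (intro mult_pos_neg) (auto intro!: divide_pos_pos)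
  then show ?thesis using z by simp
qed

lemma llr_entropy_le_ln2: "x \<ge> 0 \<Longrightarrow> llr_entropy x \<le> ln 2"
  using llr_entropy_strict_decreasing[of 0 x] llr_entropy_0 by (cases "x = 0") auto

lemma tendsto_exp_neg_scaled:
  assumes "(c::real) > 0" shows "((\<lambda>x::real. exp (- (c * x))) \<longlongrightarrow> 0) at_top"
proof -
  have "LIM x at_top. c * x :> at_top"
    by (rule filterlim_tendsto_pos_mult_at_top[OF tendsto_const assms filterlim_ident])
  then have "LIM x at_top. exp (c * x) :> at_top" by (rule filterlim_compose[OF exp_at_top])
  then have "((\<lambda>x. inverse (exp (c * x))) \<longlongrightarrow> 0) at_top" by (rule tendsto_inverse_0_at_top)
  then show ?thesis by (simp add: exp_minus)
qed

lemma tendsto_logistic: "((\<lambda>x::real. exp x / (1 + exp x)) \<longlongrightarrow> 1) at_top"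
proof -
  have eq: "exp x / (1 + exp x) = 1 / (1 + exp (- (1 * x)))" for x :: real
    by (simp add: exp_minus field_simps)
  have "((\<lambda>x::real. 1 / (1 + exp (- (1 * x)))) \<longlongrightarrow> 1 / (1 + 0)) at_top"
    by (intro tendsto_intros tendsto_exp_neg_scaled) auto
  then show ?thesis unfolding eq by simp
qed

lemma llr_entropy_tendsto_0: "(llr_entropy \<longlongrightarrow> 0) at_top"
proof -
  have eq: "llr_entropy x = ln (1 + exp (- x)) + (x ^ 1 / exp x) * (exp x / (1 + exp x))" for x
    unfolding llr_entropy_alt by simp
  have "((\<lambda>x::real. exp (- x)) \<longlongrightarrow> 0) at_top"
    using tendsto_exp_neg_scaled[of 1] by simp
  then have "((\<lambda>x::real. ln (1 + exp (- x)) + (x ^ 1 / exp x) * (exp x / (1 + exp x)))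
      \<longlongrightarrow> ln (1 + 0) + 0 * 1) at_top"
    by (intro tendsto_add tendsto_ln tendsto_const tendsto_mult tendsto_power_div_exp_0
        tendsto_logistic) auto
  then show ?thesis unfolding eq[abs_def] by simp
qed

lemma llr_entropy_attains:
  assumes "0 < v" "v \<le> ln 2" obtains x where "x \<ge> 0" "llr_entropy x = v"
proof -
  have "eventually (\<lambda>x. llr_entropy x < v \<and> x \<ge> 0) at_top"
    using order_tendstoD(2)[OF llr_entropy_tendsto_0 assms(1)] eventually_ge_at_top[of 0]
    by eventually_elim auto
  then obtain N where N: "llr_entropy N < v" "N \<ge> 0" by (auto simp: eventually_at_top_linorder)
  have cont: "continuous_on {0..N} llr_entropy"
    using deriv_llr_entropy by (intro continuous_at_imp_continuous_on ballI DERIV_isCont) blast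
  have "\<exists>x. 0 \<le> x \<and> x \<le> N \<and> llr_entropy x = v"
    by (rule IVT2') (use N assms llr_entropy_0 cont in auto)
  then show ?thesis using that by auto
qed

lemma gal_0: "gal r 0 = 2 powr r"
proof -
  have "exp ((1+r) * ln 2) = 2 powr (1+r)" by (simp add: powr_def)
  then show ?thesis unfolding gal_def by (simp add: powr_add)
qed

lemma gal_tendsto_1: assumes "r \<ge> 0" shows "(gal r \<longlongrightarrow> 1) at_top"
proof -
  have r1: "1 + r > 0" using assms by simp
  have eq: "gal r x = exp ((1+r) * ln (1 + exp (- (x/(1+r))))) * (exp x / (1 + exp x))" for x
  proof -
    have "1 + exp (x/(1+r)) = exp (x/(1+r)) * (1 + exp (- (x/(1+r))))"
      by (simp add: algebra_simps exp_minus)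
    then have "ln (1 + exp (x/(1+r))) = x/(1+r) + ln (1 + exp (- (x/(1+r))))"
      by (simp add: ln_mult add_pos_pos)
    then have "(1+r) * ln (1 + exp (x/(1+r))) = x + (1+r) * ln (1 + exp (- (x/(1+r))))"
      using r1 by (simp add: distrib_left)
    then show ?thesis unfolding gal_def by (simp add: exp_add)
  qed
  have "((\<lambda>x. exp (- (x/(1+r)))) \<longlongrightarrow> 0) at_top"
    using tendsto_exp_neg_scaled[of "1/(1+r)"] r1 by simp
  then have "((\<lambda>x. exp ((1+r) * ln (1 + exp (- (x/(1+r))))) * (exp x / (1 + exp x)))
      \<longlongrightarrow> exp ((1+r) * ln (1 + 0)) * 1) at_top"
    by (intro tendsto_intros tendsto_logistic) auto
  then show ?thesis unfolding eq by simp
qed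

lemma deriv_gal:
  assumes "r \<ge> 0"
  shows "(gal r has_real_derivative (tilt r x * (exp (x/(1+r)) - exp x) / (1 + exp x)^2)) (at x)"
proof -
  have r1: "1 + r \<noteq> 0" using assms by linarith
  have N: "exp ((1+r) * ln (1 + exp (x/(1+r)))) = tilt r x * (1 + exp (x/(1+r)))"
    unfolding tilt_def by (simp add: distrib_right exp_add algebra_simps)
  have dN: "((\<lambda>x. exp ((1+r) * ln (1 + exp (x/(1+r))))) has_real_derivative
      (tilt r x * exp (x/(1+r)))) (at x)"
    using r1 by (auto intro!: derivative_eq_intros simp: N)
  have "(gal r has_real_derivative ((tilt r x * exp (x/(1+r)) * (1 + exp x)
      - exp ((1+r) * ln (1 + exp (x/(1+r)))) * exp x) / (1 + exp x)^2)) (at x)"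
    unfolding gal_def[abs_def] power2_eq_square
    by (rule DERIV_divide[OF dN]) (auto intro!: derivative_eq_intros)
  moreover have "tilt r x * exp (x/(1+r)) * (1 + exp x)
      - exp ((1+r) * ln (1 + exp (x/(1+r)))) * exp x = tilt r x * (exp (x/(1+r)) - exp x)"
    unfolding N by (simp add: algebra_simps)
  ultimately show ?thesis by simp
qed

lemma gal_numerator_via_slope:
  assumes "r \<ge> 0"
  shows "tilt r x * (exp (x/(1+r)) - exp x) = - x * exp x * gal_slope r x"
proof (cases "x = 0")
  case False
  have "exp x * exp (- (r/(1+r)) * x) = exp (x/(1+r))"
    unfolding exp_add[symmetric] using assms by (simp add: field_simps)
  then show ?thesis using False unfolding gal_slope_def by (simp add: field_simps)
qed (simp add: gal_slope_def)

section \<open>Concavity of gal in the entropy: the slope is increasing in x\<close>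

lemma two_minus_exp_le: assumes "y \<ge> (0::real)" shows "2 * (1 - exp (-y)) \<le> y * (1 + exp (-y))"
proof -
  define k :: "real \<Rightarrow> real" where "k y = y * (1 + exp (-y)) - 2 * (1 - exp (-y))" for y
  have "k 0 \<le> k y"
  proof (rule DERIV_nonneg_imp_nondecreasing[OF assms])
    fix t assume t: "0 \<le> t" "t \<le> y"
    have d: "(k has_real_derivative (1 - exp (-t) - t * exp (-t))) (at t)"
      unfolding k_def[abs_def] by (auto intro!: derivative_eq_intros simp: algebra_simps)
    have "(1 + t) * exp (-t) \<le> exp t * exp (-t)"
      using exp_ge_add_one_self[of t] by (simp add: mult_right_mono)
    then have "0 \<le> 1 - exp (-t) - t * exp (-t)" by (simp add: exp_minus algebra_simps)
    with d show "\<exists>y. (k has_real_derivative y) (at t) \<and> 0 \<le> y" by blast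
  qed
  then show ?thesis by (simp add: k_def)
qed

lemma deriv_gal_slope:
  assumes "r \<ge> 0" "x \<noteq> 0"
  shows "(gal_slope r has_real_derivative
    (tilt r x * (((r/(1+r)) * exp (x/(1+r)) / (1 + exp (x/(1+r))) * (1 - exp (- (r/(1+r)) * x))
       + (r/(1+r)) * exp (- (r/(1+r)) * x)) * x - (1 - exp (- (r/(1+r)) * x))) / (x * x))) (at x)"
proof -
  define b where "b = r/(1+r)"
  have dT: "(tilt r has_real_derivative
      (tilt r x * (b * exp (x/(1+r)) / (1 + exp (x/(1+r)))))) (at x)"
    unfolding tilt_def[abs_def] b_def using assms(1)
    by (auto intro!: derivative_eq_intros simp: mult_ac)
  have dE: "((\<lambda>x. 1 - exp (- b * x)) has_real_derivative (b * exp (- b * x))) (at x)"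
    by (auto intro!: derivative_eq_intros)
  have "gal_slope r = (\<lambda>x. tilt r x * (1 - exp (- b * x)) / x)"
    unfolding gal_slope_def b_def by auto
  then show ?thesis
    using DERIV_divide[OF DERIV_mult[OF dT dE] DERIV_ident assms(2)] unfolding b_def[symmetric]
    by (simp add: algebra_simps)
qed

text \<open>The derivative of gal_slope is nonnegative for x > 0; the estimate uses
  e^(x/(1+r)) \<ge> 1 and the inequality two_minus_exp_le with y = rx/(1+r).\<close>
lemma deriv_gal_slope_nonneg:
  assumes r: "r \<ge> 0" and t: "t > 0"
  shows "0 \<le> tilt r t * (((r/(1+r)) * exp (t/(1+r)) / (1 + exp (t/(1+r))) * (1 - exp (- (r/(1+r)) * t))
       + (r/(1+r)) * exp (- (r/(1+r)) * t)) * t - (1 - exp (- (r/(1+r)) * t))) / (t * t)"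
proof -
  define b where "b = r/(1+r)"
  define E where "E = exp (t/(1+r))"
  define F where "F = exp (- (r/(1+r)) * t)"
  have bt: "b * t \<ge> 0" using r t by (simp add: b_def)
  have F: "F = exp (- (b*t))" unfolding F_def b_def by simp
  have F1: "F \<le> 1" unfolding F using bt by simp
  have "E \<ge> 1" unfolding E_def using r t by simp
  then have EE: "E / (1 + E) \<ge> 1/2" by (simp add: field_simps)
  have "(1/2) * (b * t * (1 - F)) \<le> E / (1 + E) * (b * t * (1 - F))"
    using bt F1 by (intro mult_right_mono[OF EE]) simp
  moreover have "2 * (1 - F) \<le> (b*t) * (1 + F)" unfolding F by (rule two_minus_exp_le[OF bt])
  moreover have "(b * E / (1 + E) * (1 - F) + b * F) * t - (1 - F)
      = E / (1 + E) * (b * t * (1 - F)) + (b*t) * F - (1 - F)"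
    by (simp add: algebra_simps add_divide_distrib[symmetric])
  ultimately have "0 \<le> (b * E / (1 + E) * (1 - F) + b * F) * t - (1 - F)"
    by (simp add: algebra_simps)
  then show ?thesis
    unfolding F_def[symmetric] E_def[symmetric] b_def[symmetric]
    using tilt_pos[of r t] t by (intro divide_nonneg_pos mult_nonneg_nonneg) (auto simp: F[symmetric])
qed

lemma gal_slope_nonneg: assumes "r \<ge> 0" "x \<ge> 0" shows "gal_slope r x \<ge> 0"
proof -
  have "exp (- (r/(1+r)) * x) \<le> 1" using assms by (simp add: mult_nonneg_nonneg)
  then show ?thesis unfolding gal_slope_def using assms tilt_pos[of r x] by simp
qed

text \<open>The slope is increasing in x: this is the concavity of gal in the entropy.\<close>
lemma gal_slope_mono:
  assumes r: "r \<ge> 0" and x: "0 \<le> x1" "x1 \<le> x2"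
  shows "gal_slope r x1 \<le> gal_slope r x2"
proof (cases "x1 = 0")
  case True then show ?thesis using gal_slope_nonneg[OF r, of x2] x by (simp add: gal_slope_def)
next
  case False
  show ?thesis
  proof (rule DERIV_nonneg_imp_nondecreasing[OF x(2)])
    fix t assume "x1 \<le> t" "t \<le> x2"
    then have "t > 0" using False x by simp
    then show "\<exists>y. (gal_slope r has_real_derivative y) (at t) \<and> 0 \<le> y"
      using deriv_gal_slope[OF r, of t] deriv_gal_slope_nonneg[OF r] by auto
  qed
qed

text \<open>Tangent inequality: the tangent to gal (as a function of the entropy) at x0 lies above
  gal on all of [0,\<infinity>).  Along x, the difference has derivative of the sign of x0 - x.\<close>
lemma gal_tangent:
  assumes r: "r \<ge> 0" and x0: "x0 \<ge> 0" and x: "x \<ge> 0"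
  shows "gal r x - gal_slope r x0 * llr_entropy x \<le> gal r x0 - gal_slope r x0 * llr_entropy x0"
proof -
  define D where "D t = gal r t - gal_slope r x0 * llr_entropy t" for t
  have dD: "(D has_real_derivative
      (t * exp t * (gal_slope r x0 - gal_slope r t) / (1 + exp t)^2)) (at t)" for t
  proof -
    have "(D has_real_derivative (tilt r t * (exp (t/(1+r)) - exp t) / (1 + exp t)^2
        - gal_slope r x0 * (- t * exp t / (1 + exp t)^2))) (at t)"
      unfolding D_def[abs_def] by (intro DERIV_diff DERIV_cmult deriv_gal[OF r] deriv_llr_entropy)
    then show ?thesis unfolding gal_numerator_via_slope[OF r]
      by (simp add: algebra_simps add_divide_distrib[symmetric] diff_divide_distrib[symmetric])
  qed
  show ?thesis
  proof (cases "x \<le> x0")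
    case True
    have "D x \<le> D x0"
    proof (rule DERIV_nonneg_imp_nondecreasing[OF True])
      fix t assume t: "x \<le> t" "t \<le> x0"
      then have "0 \<le> t * exp t * (gal_slope r x0 - gal_slope r t) / (1 + exp t)^2"
        using gal_slope_mono[OF r, of t x0] x by simp
      then show "\<exists>y. (D has_real_derivative y) (at t) \<and> 0 \<le> y" using dD by blast
    qed
    then show ?thesis by (simp add: D_def)
  next
    case False
    then have "x0 \<le> x" by simp
    have "D x \<le> D x0"
    proof (rule DERIV_nonpos_imp_nonincreasing[OF \<open>x0 \<le> x\<close>])
      fix t assume t: "x0 \<le> t" "t \<le> x"
      then have "t * exp t * (gal_slope r x0 - gal_slope r t) / (1 + exp t)^2 \<le> 0"
        using gal_slope_mono[OF r x0 t(1)] x0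
        by (intro divide_nonpos_pos mult_nonneg_nonpos) auto
      then show "\<exists>y. (D has_real_derivative y) (at t) \<and> y \<le> 0" using dD by blast
    qed
    then show ?thesis by (simp add: D_def)
  qed
qed

text \<open>The tangent at x0, evaluated at entropy 0 (the limit x \<rightarrow> \<infinity>), is at least gal(\<infinity>) = 1.\<close>
lemma gal_tangent_at_infinity:
  assumes r: "r \<ge> 0" and x0: "x0 \<ge> 0"
  shows "1 \<le> gal r x0 - gal_slope r x0 * llr_entropy x0"
proof -
  have "((\<lambda>x. gal r x - gal_slope r x0 * llr_entropy x) \<longlongrightarrow> 1 - gal_slope r x0 * 0) at_top"
    by (intro tendsto_intros gal_tendsto_1[OF r] llr_entropy_tendsto_0)
  moreover have "eventually (\<lambda>x. gal r x - gal_slope r x0 * llr_entropy x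
      \<le> gal r x0 - gal_slope r x0 * llr_entropy x0) at_top"
    using eventually_ge_at_top[of x0] by eventually_elim (use gal_tangent[OF r x0] x0 in auto)
  ultimately show ?thesis
    using tendsto_le[OF trivial_limit_at_top_linorder tendsto_const] by fastforce
qed

text \<open>Chord inequality: with h = H(x)/ln 2 \<in> (0,1], gal lies above the chord joining
  the completely noisy symbol (h = 1, gal = 2^r) and the noiseless one (h = 0, gal = 1).\<close>
lemma gal_chord:
  assumes r: "r \<ge> 0" and x: "x \<ge> 0"
  defines "h \<equiv> llr_entropy x / ln 2"
  shows "h + (1 - h) * 2 powr (-r) \<le> 2 powr (-r) * gal r x"
proof -
  have h: "0 \<le> h" "h \<le> 1"
    unfolding h_def using llr_entropy_pos[OF x] llr_entropy_le_ln2[OF x] by auto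
  have Hx: "llr_entropy x = ln 2 * h" unfolding h_def by simp
  define k where "k = gal_slope r x"
  have t0: "2 powr r - k * ln 2 \<le> gal r x - k * llr_entropy x"
    using gal_tangent[OF r x order_refl] unfolding k_def gal_0 llr_entropy_0 by simp
  have tinf: "1 \<le> gal r x - k * llr_entropy x"
    using gal_tangent_at_infinity[OF r x] unfolding k_def .
  have "h * (2 powr r - k * ln 2) + (1 - h) * 1
      \<le> h * (gal r x - k * llr_entropy x) + (1 - h) * (gal r x - k * llr_entropy x)"
    using h t0 tinf by (intro add_mono mult_left_mono) auto
  then have "h * 2 powr r + (1 - h) \<le> gal r x" unfolding Hx by (simp add: algebra_simps)
  then have "2 powr (-r) * (h * 2 powr r + (1 - h)) \<le> 2 powr (-r) * gal r x"
    by (intro mult_left_mono) auto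
  moreover have "2 powr (-r) * 2 powr r = (1::real)" by (simp add: powr_add[symmetric])
  ultimately show ?thesis by (simp add: algebra_simps)
qed

section \<open>Contribution of a single output symbol\<close>

text \<open>Terms of an output symbol with transition probabilities a = W(y|x0), b = W(y|x1)
  in the Gallager function and in the capacity.\<close>
definition F_term :: "real \<Rightarrow> real \<Rightarrow> real \<Rightarrow> real" where
  "F_term r a b =
     1/2 * (if a > 0 then a * ((1/2 * (a powr (1/(1+r)) + b powr (1/(1+r)))) / a powr (1/(1+r))) powr r else 0)
   + 1/2 * (if b > 0 then b * ((1/2 * (a powr (1/(1+r)) + b powr (1/(1+r)))) / b powr (1/(1+r))) powr r else 0)"

definition C_term :: "real \<Rightarrow> real \<Rightarrow> real" where
  "C_term a b = 1/2 * (if a > 0 then a * log 2 (a / (1/2 * (a + b))) else 0)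
              + 1/2 * (if b > 0 then b * log 2 (b / (1/2 * (a + b))) else 0)"

lemma F_term_commute: "F_term r a b = F_term r b a"
  unfolding F_term_def by (simp add: algebra_simps)

lemma C_term_commute: "C_term a b = C_term b a"
  unfolding C_term_def by (simp add: algebra_simps)

lemma powr_ratio_identity:
  fixes a A r :: real assumes "a > 0" "A > 0" "r \<ge> 0"
  shows "a * (A / a powr (1/(1+r))) powr r = a powr (1/(1+r)) * A powr r"
proof -
  have "a / a powr (r/(1+r)) = a powr (1 - r/(1+r))" using assms by (simp add: powr_diff)
  also have "1 - r/(1+r) = 1/(1+r)" using assms(3) by (simp add: field_simps)
  finally have "a / a powr (r/(1+r)) = a powr (1/(1+r))" .
  moreover have "(A / a powr (1/(1+r))) powr r = A powr r / a powr (r/(1+r))"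
    using assms by (simp add: powr_divide powr_powr)
  ultimately show ?thesis by (metis mult.commute times_divide_eq_right)
qed

lemma F_term_llr:
  assumes a: "a > 0" and b: "b > 0" and r: "r \<ge> 0"
  shows "F_term r a b = (a + b)/2 * (2 powr (-r) * gal r (ln a - ln b))"
proof -
  define s where "s = 1/(1+r)"
  define x where "x = ln a - ln b"
  define E where "E = exp (x/(1+r))"
  define A where "A = 1/2 * (a powr s + b powr s)"
  have A0: "A > 0" unfolding A_def using a b by (simp add: add_pos_pos)
  have "F_term r a b = 1/2 * (a powr s * A powr r) + 1/2 * (b powr s * A powr r)"
    unfolding F_term_def using a b powr_ratio_identity[OF a A0 r] powr_ratio_identity[OF b A0 r]
    by (simp add: s_def A_def)
  also have "\<dots> = A powr (1+r)" unfolding A_def using A0 by (simp add: powr_add algebra_simps)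
  also have "A = b powr s * ((1 + E) / 2)"
  proof -
    have "a = b * exp x" unfolding x_def using a b by (simp add: exp_diff)
    then have "a powr s = b powr s * exp x powr s" using b by (simp add: powr_mult)
    moreover have "exp x powr s = E" unfolding E_def s_def by (simp add: powr_def)
    ultimately show ?thesis unfolding A_def by (simp add: algebra_simps)
  qed
  also have "(b powr s * ((1 + E) / 2)) powr (1+r) = (b powr s) powr (1+r) * ((1 + E)/2) powr (1+r)"
    by (rule powr_mult)
  also have "(b powr s) powr (1+r) = b" using b r unfolding s_def by (simp add: powr_powr)
  also have "((1 + E)/2) powr (1+r) = (1 + E) powr (1+r) / (2 * 2 powr r)"
    by (simp add: powr_divide E_def add_pos_pos powr_add)
  also have "(1 + E) powr (1+r) = gal r x * ((a + b) / b)"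
  proof -
    have "1 + exp x = (a + b) / b" unfolding x_def using a b by (simp add: exp_diff field_simps)
    moreover have "gal r x = (1 + E) powr (1+r) / (1 + exp x)"
      unfolding gal_def E_def by (simp add: powr_def add_pos_pos)
    ultimately show ?thesis using a b by (auto simp: E_def)
  qed
  finally have "F_term r a b = b * (gal r x * ((a + b) / b) / (2 * 2 powr r))" by simp
  also have "\<dots> = (a + b)/2 * (2 powr (-r) * gal r x)"
    using b by (simp add: powr_minus field_simps)
  finally show ?thesis unfolding x_def .
qed

lemma C_term_llr:
  assumes a: "a > 0" and b: "b > 0"
  shows "C_term a b = (a + b)/2 * (1 - llr_entropy (ln a - ln b) / ln 2)"
proof -
  have ab: "a + b > 0" using a b by simp
  have l2: "ln (2::real) \<noteq> 0" by simp
  have "ln (a / (1/2 * (a + b))) = ln 2 + ln a - ln (a + b)"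
    "ln (b / (1/2 * (a + b))) = ln 2 + ln b - ln (a + b)"
    using a b ab by (simp_all add: ln_div ln_mult)
  then have "C_term a b = 1/2 * (a * ((ln 2 + ln a - ln (a + b)) / ln 2))
      + 1/2 * (b * ((ln 2 + ln b - ln (a + b)) / ln 2))"
    unfolding C_term_def log_def using a b by simp
  also have "\<dots> = (a + b)/2 + (a * ln a + b * ln b - (a + b) * ln (a + b)) / (2 * ln 2)"
    using l2 by (simp add: field_simps)
  finally have C: "C_term a b = (a + b)/2 + (a * ln a + b * ln b - (a + b) * ln (a + b)) / (2 * ln 2)" .
  have ex: "exp (ln a - ln b) = a / b" using a b by (simp add: exp_diff)
  have "1 + a / b = (a + b) / b" "(a / b) / ((a + b) / b) = a / (a + b)" using b by (simp_all add: field_simps)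
  then have "llr_entropy (ln a - ln b) = ln (a + b) - ln b - (ln a - ln b) * (a / (a + b))"
    unfolding llr_entropy_def ex using b ab
    by (simp add: ln_div times_divide_eq_right[symmetric] del: times_divide_eq_right) simp
  moreover have "(a + b) * ((ln a - ln b) * (a / (a + b))) = a * (ln a - ln b)" using ab by simp
  ultimately have "(a + b) * llr_entropy (ln a - ln b)
      = (a + b) * ln (a + b) - (a + b) * ln b - a * (ln a - ln b)"
    by (simp add: right_diff_distrib)
  also have "\<dots> = - (a * ln a + b * ln b - (a + b) * ln (a + b))" by (simp add: algebra_simps)
  finally have E: "(a + b) * llr_entropy (ln a - ln b) = - (a * ln a + b * ln b - (a + b) * ln (a + b))" .
  have "(a + b)/2 * (1 - llr_entropy (ln a - ln b) / ln 2)
      = (a + b)/2 - ((a + b) * llr_entropy (ln a - ln b)) / (2 * ln 2)"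
    using l2 by (simp add: field_simps)
  also have "\<dots> = C_term a b" unfolding C E by (simp only: minus_divide_left diff_minus_eq_add)
  finally show ?thesis ..
qed

lemma F_term_decisive: assumes "a \<ge> 0" shows "F_term r a 0 = a/2 * 2 powr (-r)"
proof (cases "a = 0")
  case False
  then have "a > 0" "a powr (1/(1+r)) > 0" using assms by auto
  moreover have "(1/2::real) powr r = 2 powr (-r)" by (simp add: powr_divide powr_minus_divide)
  ultimately show ?thesis unfolding F_term_def by simp
qed (simp add: F_term_def)

lemma C_term_decisive: assumes "a \<ge> 0" shows "C_term a 0 = a/2"
proof (cases "a = 0")
  case False
  then have "a / (1/2 * (a + 0)) = 2" "a > 0" using assms by auto
  then show ?thesis unfolding C_term_def by simp
qed (simp add: C_term_def)

text \<open>Every output symbol is either decisive (one probability vanishes, so the symbol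
  identifies the input and carries no entropy) or has a finite log-likelihood ratio
  x \<ge> 0 (after ordering a and b).\<close>
lemma symbol_cases:
  assumes a: "0 \<le> a" and b: "0 \<le> b" and r: "0 \<le> r"
  obtains (decisive) "C_term a b = (a+b)/2" "F_term r a b = (a+b)/2 * 2 powr (-r)"
  | (llr) x where "x \<ge> 0" "C_term a b = (a+b)/2 * (1 - llr_entropy x / ln 2)"
      "F_term r a b = (a+b)/2 * (2 powr (-r) * gal r x)"
proof -
  consider "b = 0" | "a = 0" | "0 < b" "b \<le> a" | "0 < a" "a \<le> b" using a b by linarith
  then show thesis
  proof cases
    case 1 then show ?thesis using decisive a by (simp add: F_term_decisive C_term_decisive)
  next
    case 2 then show ?thesis
      using decisive b F_term_commute[of r a] C_term_commute[of a]
      by (simp add: F_term_decisive C_term_decisive)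
  next
    case 3 then show ?thesis
      using llr[of "ln a - ln b"] r by (simp add: F_term_llr C_term_llr)
  next
    case 4 then show ?thesis
      using llr[of "ln b - ln a"] r F_term_commute[of r a] C_term_commute[of a]
      by (simp add: F_term_llr C_term_llr add.commute)
  qed
qed

lemma C_term_bounds:
  assumes "0 \<le> a" "0 \<le> b" shows "0 \<le> C_term a b \<and> C_term a b \<le> (a+b)/2"
proof (cases rule: symbol_cases[OF assms order_refl, case_names decisive llr])
  case (llr x)
  then have "0 \<le> 1 - llr_entropy x / ln 2" "1 - llr_entropy x / ln 2 \<le> 1"
    using llr_entropy_pos[of x] llr_entropy_le_ln2[of x] by auto
  moreover have "0 \<le> (a+b)/2" using assms by simp
  ultimately show ?thesis unfolding llr(2) by (simp add: mult_left_le)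
qed (use assms in simp)

text \<open>Chord bound per symbol: the symbol does at least as well as an erasure channel
  with the same capacity contribution.\<close>
lemma F_term_lower:
  assumes "0 \<le> a" "0 \<le> b" "0 \<le> r"
  shows "((a+b)/2 - C_term a b) + C_term a b * 2 powr (-r) \<le> F_term r a b"
proof (cases rule: symbol_cases[OF assms, case_names decisive llr])
  case (llr x)
  define h where "h = llr_entropy x / ln 2"
  have "(a+b)/2 * (h + (1 - h) * 2 powr (-r)) \<le> (a+b)/2 * (2 powr (-r) * gal r x)"
    using gal_chord[OF assms(3) llr(1)] assms unfolding h_def by (intro mult_left_mono) auto
  moreover have "((a+b)/2 - C_term a b) + C_term a b * 2 powr (-r)
      = (a+b)/2 * (h + (1 - h) * 2 powr (-r))"
    unfolding llr(2) h_def by (simp add: algebra_simps)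
  ultimately show ?thesis unfolding llr(3) by simp
next
  case decisive
  then show ?thesis unfolding decisive by simp
qed

lemma F_term_upper:
  assumes "0 \<le> a" "0 \<le> b" "0 \<le> r" "0 \<le> x0"
  shows "F_term r a b \<le> 2 powr (-r) * ((a+b)/2 * (gal r x0 - gal_slope r x0 * llr_entropy x0)
           + gal_slope r x0 * (ln 2 * ((a+b)/2 - C_term a b)))"
proof (cases rule: symbol_cases[OF assms(1-3), case_names decisive llr])
  case decisive
  have "(a+b)/2 * 2 powr (-r) * 1
      \<le> (a+b)/2 * 2 powr (-r) * (gal r x0 - gal_slope r x0 * llr_entropy x0)"
    using gal_tangent_at_infinity[OF assms(3,4)] assms by (intro mult_left_mono) auto
  then show ?thesis unfolding decisive by (simp add: mult_ac)
next
  case (llr x)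
  have "F_term r a b = (a+b)/2 * 2 powr (-r) * gal r x" unfolding llr(3) by simp
  also have "\<dots> \<le> (a+b)/2 * 2 powr (-r)
      * (gal r x0 - gal_slope r x0 * llr_entropy x0 + gal_slope r x0 * llr_entropy x)"
    using gal_tangent[OF assms(3,4) llr(1)] assms by (intro mult_left_mono) auto
  also have "\<dots> = 2 powr (-r) * ((a+b)/2 * (gal r x0 - gal_slope r x0 * llr_entropy x0)
      + gal_slope r x0 * ((a+b)/2 * llr_entropy x))"
    by (simp add: field_simps)
  also have "(a+b)/2 * llr_entropy x = ln 2 * ((a+b)/2 - C_term a b)"
    unfolding llr(2) by (simp add: field_simps)
  finally show ?thesis .
qed

lemma F_term_noiseless:
  assumes "0 \<le> a" "0 \<le> b" "0 \<le> r" and "C_term a b = (a+b)/2"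
  shows "F_term r a b = (a+b)/2 * 2 powr (-r)"
proof (cases rule: symbol_cases[OF assms(1-3), case_names decisive llr])
  case (llr x)
  from assms(4) have "(a+b)/2 * (1 - llr_entropy x / ln 2) = (a+b)/2" unfolding llr(2) .
  then have "(a+b)/2 * (llr_entropy x / ln 2) = 0" by (simp add: algebra_simps)
  then have "a + b = 0" using llr_entropy_pos[OF llr(1)] by simp
  then show ?thesis using llr by simp
qed simp

section \<open>Summing over the output alphabet\<close>

lemma sum_filter_as_if: "(\<Sum>y\<in>{y::'y::finite. P y}. g y) = (\<Sum>y\<in>UNIV. if P y then g y else 0)"
  by (simp add: sum.If_cases)

lemma sum_over_bool: "(\<Sum>x\<in>(UNIV::bool set). f x) = f False + f True"
  by (simp add: UNIV_bool)

lemma gallager_F_as_sum: "gallager_F W r = (\<Sum>y\<in>UNIV. F_term r (W False y) (W True y))"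
  unfolding gallager_F_def F_term_def sum_filter_as_if sum_over_bool
  by (simp add: sum_distrib_left sum.distrib algebra_simps)

lemma capacity_as_sum: "capacity W = (\<Sum>y\<in>UNIV. C_term (W False y) (W True y))"
  unfolding capacity_def C_term_def sum_filter_as_if sum_over_bool
  by (simp add: sum_distrib_left sum.distrib algebra_simps)

lemma output_weights_sum:
  assumes "stochastic_channel W" shows "(\<Sum>y\<in>UNIV. (W False y + W True y)/2) = 1"
  using assms unfolding stochastic_channel_def
  by (simp add: sum.distrib sum_divide_distrib[symmetric])

lemma channel_nonneg: "stochastic_channel W \<Longrightarrow> 0 \<le> W x y"
  unfolding stochastic_channel_def by auto

lemma capacity_bounds:
  assumes W: "stochastic_channel W" shows "0 \<le> capacity W" "capacity W \<le> 1"
proof -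
  have C: "0 \<le> C_term (W False y) (W True y) \<and> C_term (W False y) (W True y) \<le> (W False y + W True y)/2"
    for y using C_term_bounds channel_nonneg[OF W] by blast
  show "0 \<le> capacity W" unfolding capacity_as_sum using C by (intro sum_nonneg) auto
  have "capacity W \<le> (\<Sum>y\<in>UNIV. (W False y + W True y)/2)"
    unfolding capacity_as_sum using C by (intro sum_mono) auto
  then show "capacity W \<le> 1" using output_weights_sum[OF W] by simp
qed

lemma F_bec_le_gallager_F:
  assumes W: "stochastic_channel W" and r: "0 \<le> r"
  shows "F_bec r (capacity W) \<le> gallager_F W r"
proof -
  let ?w = "\<lambda>y. (W False y + W True y)/2" and ?K = "\<lambda>y. C_term (W False y) (W True y)"
  have "(\<Sum>y\<in>UNIV. (?w y - ?K y) + ?K y * 2 powr (-r))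
      = (\<Sum>y\<in>UNIV. ?w y) - (\<Sum>y\<in>UNIV. ?K y) + (\<Sum>y\<in>UNIV. ?K y) * 2 powr (-r)"
    by (simp add: sum.distrib sum_subtractf sum_distrib_right)
  then have "F_bec r (capacity W) = (\<Sum>y\<in>UNIV. (?w y - ?K y) + ?K y * 2 powr (-r))"
    unfolding F_bec_def capacity_as_sum output_weights_sum[OF W] by (simp add: algebra_simps)
  also have "\<dots> \<le> gallager_F W r"
    unfolding gallager_F_as_sum using F_term_lower channel_nonneg[OF W] r by (intro sum_mono) blast
  finally show ?thesis .
qed

lemma gallager_F_le_tangent:
  assumes W: "stochastic_channel W" and r: "0 \<le> r" and x0: "0 \<le> x0"
  shows "gallager_F W r \<le> 2 powr (-r) * (gal r x0 - gal_slope r x0 * llr_entropy x0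
           + gal_slope r x0 * (ln 2 * (1 - capacity W)))"
proof -
  let ?w = "\<lambda>y. (W False y + W True y)/2" and ?K = "\<lambda>y. C_term (W False y) (W True y)"
  have "gallager_F W r \<le> (\<Sum>y\<in>UNIV. 2 powr (-r) * (?w y * (gal r x0 - gal_slope r x0 * llr_entropy x0)
           + gal_slope r x0 * (ln 2 * (?w y - ?K y))))"
    unfolding gallager_F_as_sum using F_term_upper channel_nonneg[OF W] r x0 by (intro sum_mono) blast
  also have "\<dots> = 2 powr (-r) * ((\<Sum>y\<in>UNIV. ?w y) * (gal r x0 - gal_slope r x0 * llr_entropy x0)
           + gal_slope r x0 * (ln 2 * ((\<Sum>y\<in>UNIV. ?w y) - capacity W)))"
    unfolding capacity_as_sum
    by (simp add: sum_distrib_left sum_distrib_right sum.distrib sum_subtractf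
        right_diff_distrib distrib_left mult.assoc)
  finally show ?thesis unfolding output_weights_sum[OF W] by simp
qed

text \<open>A noiseless channel (C = 1) has F = 2^-r: every output symbol determines the input.\<close>
lemma gallager_F_noiseless:
  assumes W: "stochastic_channel W" and r: "0 \<le> r" and C: "capacity W = 1"
  shows "gallager_F W r = 2 powr (-r)"
proof -
  let ?w = "\<lambda>y. (W False y + W True y)/2" and ?K = "\<lambda>y. C_term (W False y) (W True y)"
  have "(\<Sum>y\<in>UNIV. ?w y - ?K y) = 0"
    using output_weights_sum[OF W] C unfolding capacity_as_sum by (simp add: sum_subtractf)
  moreover have "\<forall>y. 0 \<le> ?w y - ?K y" using C_term_bounds channel_nonneg[OF W] by fastforce
  ultimately have "\<forall>y. ?K y = ?w y" by (subst (asm) sum_nonneg_eq_0_iff) auto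
  then have "\<forall>y. F_term r (W False y) (W True y) = ?w y * 2 powr (-r)"
    using F_term_noiseless channel_nonneg[OF W] r by blast
  then have "gallager_F W r = (\<Sum>y\<in>UNIV. ?w y * 2 powr (-r))"
    unfolding gallager_F_as_sum by (simp only:)
  also have "\<dots> = (\<Sum>y\<in>UNIV. ?w y) * 2 powr (-r)" by (rule sum_distrib_right[symmetric])
  finally show ?thesis unfolding output_weights_sum[OF W] by simp
qed

section \<open>The BSC of capacity C\<close>

lemma bin_entropy_logistic: "bin_entropy (1/(1+exp x)) = llr_entropy x / ln 2"
proof -
  define e where "e = exp x"
  have e0: "e > 0" unfolding e_def by simp
  have om: "1 - 1/(1+e) = e/(1+e)" using e0 by (simp add: field_simps)
  have "- (1/(1+e)) * ln (1/(1+e)) - (1 - 1/(1+e)) * ln (1 - 1/(1+e))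
      = 1/(1+e) * ln (1+e) - e/(1+e) * (x - ln (1+e))"
    unfolding om using e0 by (simp add: ln_div e_def)
  also have "\<dots> = ((1/(1+e) + e/(1+e)) * ln (1+e)) - x * e/(1+e)"
    by (simp add: algebra_simps)
  also have "1/(1+e) + e/(1+e) = 1" using e0 by (simp add: add_divide_distrib[symmetric])
  finally have "- (1/(1+e)) * ln (1/(1+e)) - (1 - 1/(1+e)) * ln (1 - 1/(1+e)) = llr_entropy x"
    unfolding llr_entropy_def e_def by simp
  moreover have "bin_entropy p = (- p * ln p - (1-p) * ln (1-p)) / ln 2" for p
    unfolding bin_entropy_def log_def by (simp add: diff_divide_distrib)
  ultimately show ?thesis unfolding e_def by simp
qed

lemma prob_as_logistic:
  fixes p :: real assumes "0 < p" "p \<le> 1/2" obtains x where "x \<ge> 0" "p = 1/(1+exp x)"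
proof
  have q: "(1-p)/p \<ge> 1" using assms by (simp add: field_simps)
  then show "ln ((1-p)/p) \<ge> 0" by simp
  have "exp (ln ((1-p)/p)) = (1-p)/p" using q by simp
  then show "p = 1/(1+exp (ln ((1-p)/p)))" using assms by (simp add: field_simps)
qed

lemma bin_entropy_inv_logistic:
  assumes x0: "x0 \<ge> 0" shows "bin_entropy_inv (llr_entropy x0 / ln 2) = 1/(1+exp x0)"
  unfolding bin_entropy_inv_def
proof (rule the_equality)
  have "1 + exp x0 \<ge> 2" using x0 by simp
  then show "1/(1+exp x0) \<in> {0..1/2} \<and> bin_entropy (1/(1+exp x0)) = llr_entropy x0 / ln 2"
    by (simp add: bin_entropy_logistic field_simps)
next
  fix p assume p: "p \<in> {0..1/2} \<and> bin_entropy p = llr_entropy x0 / ln 2"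
  have "p \<noteq> 0" using p llr_entropy_pos[OF x0] by (auto simp: bin_entropy_def)
  then obtain y where y: "y \<ge> 0" "p = 1/(1+exp y)" using prob_as_logistic[of p] p by auto
  then have "llr_entropy y = llr_entropy x0" using p by (simp add: bin_entropy_logistic)
  then have "y = x0"
    using llr_entropy_strict_decreasing[OF y(1), of x0] llr_entropy_strict_decreasing[OF x0, of y]
    by (cases "y < x0"; cases "x0 < y") auto
  then show "p = 1/(1+exp x0)" using y by simp
qed

lemma bin_entropy_inv_0: "bin_entropy_inv 0 = 0"
  unfolding bin_entropy_inv_def
proof (rule the_equality)
  fix p :: real assume p: "p \<in> {0..1/2} \<and> bin_entropy p = 0"
  show "p = 0"
  proof (rule ccontr)
    assume "p \<noteq> 0"
    then obtain y where "y \<ge> 0" "p = 1/(1+exp y)" using prob_as_logistic[of p] p by auto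
    then show False using p llr_entropy_pos[of y] by (simp add: bin_entropy_logistic)
  qed
qed (simp add: bin_entropy_def)

lemma F_bsc_logistic:
  assumes r: "r \<ge> 0" and x0: "x0 \<ge> 0" and C: "1 - C = llr_entropy x0 / ln 2"
  shows "F_bsc r C = 2 powr (-r) * gal r x0"
proof -
  define e where "e = exp x0"
  define s where "s = 1/(1+r)"
  define E where "E = exp (x0/(1+r))"
  have e0: "e > 0" unfolding e_def by simp
  have eps: "bin_entropy_inv (1 - C) = 1/(1+e)" unfolding C e_def by (rule bin_entropy_inv_logistic[OF x0])
  have om: "1 - 1/(1+e) = e/(1+e)" using e0 by (simp add: field_simps)
  have "e powr s = E" unfolding e_def E_def s_def by (simp add: powr_def)
  then have "(1/(1+e)) powr s + (e/(1+e)) powr s = (1 + E) / (1+e) powr s"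
    using e0 by (simp add: powr_divide add_divide_distrib)
  then have "((1/(1+e)) powr s + (e/(1+e)) powr s) powr (1+r)
      = (1+E) powr (1+r) / ((1+e) powr s) powr (1+r)"
    using e0 by (simp add: powr_divide E_def add_pos_pos)
  also have "((1+e) powr s) powr (1+r) = 1 + e" using e0 r unfolding s_def by (simp add: powr_powr)
  also have "(1+E) powr (1+r) / (1 + e) = gal r x0"
    unfolding gal_def E_def e_def by (simp add: powr_def add_pos_pos)
  finally show ?thesis unfolding F_bsc_def Let_def eps om s_def by simp
qed

lemma F_bsc_noiseless: "F_bsc r 1 = 2 powr (-r)"
  unfolding F_bsc_def Let_def by (simp add: bin_entropy_inv_0)

lemma gallager_F_le_F_bsc:
  assumes W: "stochastic_channel W" and r: "0 \<le> r"
  shows "gallager_F W r \<le> F_bsc r (capacity W)"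
proof (cases "capacity W = 1")
  case True
  then show ?thesis using gallager_F_noiseless[OF W r] F_bsc_noiseless by simp
next
  case False
  then have "0 < ln 2 * (1 - capacity W)" "ln 2 * (1 - capacity W) \<le> ln 2"
    using capacity_bounds[OF W] by auto
  then obtain x0 where x0: "x0 \<ge> 0" "llr_entropy x0 = ln 2 * (1 - capacity W)"
    by (rule llr_entropy_attains)
  have "gallager_F W r \<le> 2 powr (-r) * gal r x0"
    using gallager_F_le_tangent[OF W r x0(1)] unfolding x0(2) by simp
  also have "\<dots> = F_bsc r (capacity W)"
    using x0 by (intro F_bsc_logistic[symmetric] r) auto
  finally show ?thesis .
qed

section \<open>From Gallager functions to exponents\<close>

text \<open>F_bec(r;C) \<ge> 2^-r for capacities in [0,1]; this gives positivity of all the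
  Gallager functions and an upper bound on the exponents.\<close>
lemma F_bec_ge: assumes "0 \<le> C" "C \<le> 1" "0 \<le> r" shows "2 powr (-r) \<le> F_bec r C"
proof -
  have "2 powr (-r) \<le> (1::real)" using powr_mono[of "-r" 0 "2::real"] assms(3) by simp
  then have "(1 - 2 powr (-r)) * C \<le> (1 - 2 powr (-r)) * 1"
    using assms by (intro mult_left_mono) auto
  then show ?thesis unfolding F_bec_def by (simp add: algebra_simps)
qed

text \<open>Sandwich of E0 between the BSC and BEC values, together with E0_bec(r) \<le> r
  (which bounds all exponents on [0,1]).\<close>
lemma E0_sandwich:
  assumes W: "stochastic_channel W" and r: "0 \<le> r"
  shows "- log 2 (F_bsc r (capacity W)) \<le> E0 W r"
    "E0 W r \<le> - log 2 (F_bec r (capacity W))"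
    "- log 2 (F_bec r (capacity W)) \<le> r"
proof -
  have chain: "0 < 2 powr (-r)" "2 powr (-r) \<le> F_bec r (capacity W)"
    "F_bec r (capacity W) \<le> gallager_F W r" "gallager_F W r \<le> F_bsc r (capacity W)"
    using F_bec_ge[OF capacity_bounds[OF W] r] F_bec_le_gallager_F[OF W r]
      gallager_F_le_F_bsc[OF W r] by auto
  then have pos: "0 < F_bec r (capacity W)" "0 < gallager_F W r" "0 < F_bsc r (capacity W)"
    by linarith+
  show "- log 2 (F_bsc r (capacity W)) \<le> E0 W r"
    unfolding E0_def using chain pos by simp
  show "E0 W r \<le> - log 2 (F_bec r (capacity W))"
    unfolding E0_def using chain pos by simp
  have "log 2 (2 powr (-r)) \<le> log 2 (F_bec r (capacity W))"
    using chain by (intro log_mono) auto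
  then show "- log 2 (F_bec r (capacity W)) \<le> r" by simp
qed

lemma SUP_mono_pointwise:
  fixes f g :: "'a \<Rightarrow> real"
  assumes "A \<noteq> {}" "\<And>t. t \<in> A \<Longrightarrow> f t \<le> g t" "\<And>t. t \<in> A \<Longrightarrow> g t \<le> M"
  shows "(SUP t\<in>A. f t) \<le> (SUP t\<in>A. g t)"
proof (rule cSUP_mono[OF assms(1)])
  show "bdd_above (g ` A)" using assms(3) by (rule bdd_aboveI2)
qed (use assms(2) in auto)

theorem mainTheorem8:
  fixes W :: "bool \<Rightarrow> 'y::finite \<Rightarrow> real" and R :: real
  assumes "bims W" and "R \<ge> 0"
  shows "Er_bsc R (capacity W) \<le> Er W R \<and> Er W R \<le> Er_bec R (capacity W)"
proof -
  have W: "stochastic_channel W" using assms(1) unfolding bims_def by simp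
  note E0 = E0_sandwich[OF W]
  have bec_bound: "- log 2 (F_bec r (capacity W)) - r * R \<le> 1" if "r \<in> {0..1}" for r
  proof -
    have "0 \<le> r * R" using that assms(2) by simp
    then show ?thesis using E0(3)[of r] that by simp
  qed
  have "Er_bsc R (capacity W) \<le> Er W R"
    unfolding Er_bsc_def Er_def
  proof (rule SUP_mono_pointwise)
    fix r :: real assume "r \<in> {0..1}"
    then show "- log 2 (F_bsc r (capacity W)) - r * R \<le> E0 W r - r * R"
      and "E0 W r - r * R \<le> 1"
      using E0(1,2)[of r] bec_bound[of r] by auto
  qed simp
  moreover have "Er W R \<le> Er_bec R (capacity W)"
    unfolding Er_bec_def Er_def
  proof (rule SUP_mono_pointwise)
    fix r :: real assume "r \<in> {0..1}"
    then show "E0 W r - r * R \<le> - log 2 (F_bec r (capacity W)) - r * R"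
      and "- log 2 (F_bec r (capacity W)) - r * R \<le> 1"
      using E0(2)[of r] bec_bound[of r] by auto
  qed simp
  ultimately show ?thesis ..
qed

end
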